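(* Let $C_1,C_2,C_3>0$. Consider gradient descent $\theta(k+1)=\theta(k)-\eta\frac{\partial L(\theta(k))}{\partial\theta}$, $\theta(k)=\mathrm{vec}(W(k),A(k),b(k))$, with gradients given by the formulas in the context. Let $\alpha_0:=\sigma_{\min}(Z(0))$, $\lambda_1:=\|W(0)\|+C_1$, $\lambda_2:=\|A(0)\|+C_2$, $\lambda_3:=\|b(0)\|+C_3$, choose $\gamma>0$ with $\gamma_0:=\gamma\lambda_2<1$, and let $\lambda_0:=\max\left\{\frac{\lambda_1}{C_3},\frac{\gamma_0\lambda_1\lambda_3}{(1-\gamma_0)C_2\lambda_2},\frac{\lambda_3}{C_1}\right\}$ and $\kappa:=1+\frac{\gamma_0^2}{(1-\gamma_0)^2}\frac{\lambda_1^2}{\lambda_2^2}$. Assume $$\alpha_0^2\ge\frac{8}{1-\gamma_0}\lambda_0\|X\|_F\|\hat y(0)-y\|,\quad \alpha_0^3\ge\kappa\frac{16\lambda_3}{(1-\gamma_0)^2}\|X\|_F^2\|\hat y(0)-y\|,\quad \alpha_0^2\ge\kappa\frac{16\lambda_3^2}{(1-\gamma_0)^2}\|X\|_F^2,$$ and choose the step size $$0<\eta<\min\left\{\frac{4}{\alpha_0^2},\,2(1-\gamma_0)^2\,\overline\lambda\,\lambda_1^{-4}\lambda_3^{-2}\|X\|_F^{-2}\right\},\qquad \overline\lambda:=\kappa\left(\kappa\lambda_1^{-2}+\lambda_3^{-2}\right)^{-2}.$$ Then for all $k\ge0$: (i) $\|W(k)\|\le\lambda_1$, $\|A(k)\|\le\lambda_2$,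 $\|b(k)\|\le\lambda_3$ (in particular $Z(k)$ is well defined); (ii) $\sigma_{\min}(Z(k))\ge\alpha_0/2$; (iii) $L(\theta(k))\le(1-\eta\alpha_0^2/4)^kL(\theta(0))$.
   Context: Data $X\in\mathbb{R}^{N\times d}$, $y\in\mathbb{R}^N$; parameters $W\in\mathbb{R}^{d\times m}$, $A\in\mathbb{R}^{m\times m}$, $b\in\mathbb{R}^m$. $\sigma(u)=\max\{0,u\}$ entrywise, $\sigma'(u)=\mathbf 1\{u>0\}$ entrywise. $\Phi=\sigma(XW)$; $Z$ is the unique solution of $Z=\sigma(\gamma ZA+\Phi)$ (exists when $\gamma\|A\|<1$); $\hat y=Zb$; $L(\theta)=\frac12\|\hat y-y\|^2$. $D:=\mathrm{diag}[\mathrm{vec}(\sigma'(\gamma ZA+\Phi))]$, $E:=\mathrm{diag}[\mathrm{vec}(\sigma'(XW))]$, $Q:=I_{Nm}-\gamma D(A^T\otimes I_N)$. Gradients: $\frac{\partial L}{\partial W}=[DE(I_m\otimes X)]^TQ^{-T}(b^T\otimes I_N)^T(\hat y-y)$, $\frac{\partial L}{\partial A}=\gamma[D(I_m\otimes Z)]^TQ^{-T}(b^T\otimes I_N)^T(\hat y-y)$, $\frac{\partial L}{\partial b}=Z^T(\hat y-y)$ (gradients w.r.t. $\mathrm{vec}(W)$, $\mathrm{vec}(A)$, $b$). $\|\cdot\|$ is the spectral norm (Euclidean for vectors), $\|\cdot\|_F$ the Frobenius norm, $\sigma_{\min}(Z)=\sqrt{\lambda_{\min}(ZZ^T)}$.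 *)

theory Defs
  imports "HOL-Analysis.Analysis"
begin

text \<open>An r x c real matrix is an element of real^'c^'r (rows indexed by 'r, columns by 'c).
  Column-major vectorisation: vec M is indexed by pairs (column, row).
  Kronecker product: (P kron R) at row (i1,i2), column (j1,j2) is P i1 j1 * R i2 j2;
  with these conventions vec (P ** M ** R) = (transpose R kron P) *v vec M.\<close>

definition vecm :: "real^'c^'r \<Rightarrow> real^('c \<times> 'r)" where
  "vecm M = (\<chi> p. M $ snd p $ fst p)"

definition kron :: "real^'q^'p \<Rightarrow> real^'s^'r \<Rightarrow> real^('q \<times> 's)^('p \<times> 'r)" where
  "kron P R = (\<chi> i j. P $ fst i $ fst j * R $ snd i $ snd j)"

definition diagm :: "real^'n \<Rightarrow> real^'n^'n" where
  "diagm v = (\<chi> i j. if i = j then v $ i else 0)"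

definition colmat :: "real^'n \<Rightarrow> real^1^'n" where
  "colmat v = (\<chi> i j. v $ i)"

definition relu :: "real^'c^'r \<Rightarrow> real^'c^'r" where
  "relu M = (\<chi> i j. max 0 (M $ i $ j))"

definition relu' :: "real^'c^'r \<Rightarrow> real^'c^'r" where
  "relu' M = (\<chi> i j. if M $ i $ j > 0 then 1 else 0)"

definition specnorm :: "real^'c^'r \<Rightarrow> real" where
  "specnorm M = onorm (\<lambda>x. M *v x)"

definition frob :: "real^'c^'r \<Rightarrow> real" where
  "frob M = sqrt (\<Sum>i\<in>UNIV. \<Sum>j\<in>UNIV. (M $ i $ j)^2)"

definition lambda_min :: "real^'n^'n \<Rightarrow> real" where
  "lambda_min M = Min {\<mu>. \<exists>v. v \<noteq> 0 \<and> M *v v = \<mu> *\<^sub>R v}"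

definition sigma_min :: "real^'c^'r \<Rightarrow> real" where
  "sigma_min Z = sqrt (lambda_min (Z ** transpose Z))"

definition Phi :: "real^'d^'N \<Rightarrow> real^'m^'d \<Rightarrow> real^'m^'N" where
  "Phi X W = relu (X ** W)"

definition is_equil :: "real \<Rightarrow> real^'d^'N \<Rightarrow> real^'m^'d \<Rightarrow> real^'m^'m \<Rightarrow> real^'m^'N \<Rightarrow> bool" where
  "is_equil \<gamma> X W A Z \<longleftrightarrow> Z = relu (\<gamma> *\<^sub>R (Z ** A) + Phi X W)"

definition Zeq :: "real \<Rightarrow> real^'d^'N \<Rightarrow> real^'m^'d \<Rightarrow> real^'m^'m \<Rightarrow> real^'m^'N" where
  "Zeq \<gamma> X W A = (THE Z. is_equil \<gamma> X W A Z)"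

definition yhat :: "real \<Rightarrow> real^'d^'N \<Rightarrow> real^'m^'d \<Rightarrow> real^'m^'m \<Rightarrow> real^'m \<Rightarrow> real^'N" where
  "yhat \<gamma> X W A b = Zeq \<gamma> X W A *v b"

definition loss :: "real \<Rightarrow> real^'d^'N \<Rightarrow> real^'N \<Rightarrow> real^'m^'d \<Rightarrow> real^'m^'m \<Rightarrow> real^'m \<Rightarrow> real" where
  "loss \<gamma> X y W A b = 1/2 * (norm (yhat \<gamma> X W A b - y))^2"

definition Dm :: "real \<Rightarrow> real^'d^'N \<Rightarrow> real^'m^'d \<Rightarrow> real^'m^'m \<Rightarrow> real^('m \<times> 'N)^('m \<times> 'N)" where
  "Dm \<gamma> X W A = diagm (vecm (relu' (\<gamma> *\<^sub>R (Zeq \<gamma> X W A ** A) + Phi X W)))"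

definition Em :: "real^'d^'N \<Rightarrow> real^'m^'d \<Rightarrow> real^('m \<times> 'N)^('m \<times> 'N)" where
  "Em X W = diagm (vecm (relu' (X ** W)))"

definition Qm :: "real \<Rightarrow> real^'d^'N \<Rightarrow> real^'m^'d \<Rightarrow> real^'m^'m \<Rightarrow> real^('m \<times> 'N)^('m \<times> 'N)" where
  "Qm \<gamma> X W A = mat 1 - \<gamma> *\<^sub>R (Dm \<gamma> X W A ** kron (transpose A) (mat 1 :: real^'N^'N))"

definition backprop :: "real \<Rightarrow> real^'d^'N \<Rightarrow> real^'N \<Rightarrow> real^'m^'d \<Rightarrow> real^'m^'m \<Rightarrow> real^'m \<Rightarrow> real^('m \<times> 'N)" where
  "backprop \<gamma> X y W A b =
     matrix_inv (transpose (Qm \<gamma> X W A))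
     *v (transpose (kron (transpose (colmat b)) (mat 1 :: real^'N^'N))
         *v vecm (colmat (yhat \<gamma> X W A b - y)))"

definition gradW :: "real \<Rightarrow> real^'d^'N \<Rightarrow> real^'N \<Rightarrow> real^'m^'d \<Rightarrow> real^'m^'m \<Rightarrow> real^'m \<Rightarrow> real^('m \<times> 'd)" where
  "gradW \<gamma> X y W A b =
     transpose (Dm \<gamma> X W A ** Em X W ** kron (mat 1 :: real^'m^'m) X) *v backprop \<gamma> X y W A b"

definition gradA :: "real \<Rightarrow> real^'d^'N \<Rightarrow> real^'N \<Rightarrow> real^'m^'d \<Rightarrow> real^'m^'m \<Rightarrow> real^'m \<Rightarrow> real^('m \<times> 'm)" where
  "gradA \<gamma> X y W A b =
     \<gamma> *\<^sub>R (transpose (Dm \<gamma> X W A ** kron (mat 1 :: real^'m^'m) (Zeq \<gamma> X W A)) *v backprop \<gamma> X y W A b)"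

definition gradb :: "real \<Rightarrow> real^'d^'N \<Rightarrow> real^'N \<Rightarrow> real^'m^'d \<Rightarrow> real^'m^'m \<Rightarrow> real^'m \<Rightarrow> real^'m" where
  "gradb \<gamma> X y W A b = transpose (Zeq \<gamma> X W A) *v (yhat \<gamma> X W A b - y)"

end

theory Submission
  imports Defs
begin

text \<open>Along the iteration three invariants are kept: the parameters stay in the balls of radii
  C1, C2, C3 around their initial values, sigma_min (Z k) \<ge> \<alpha>0 / 2, and the residual
  contracts by \<rho> = sqrt (1 - \<eta> \<alpha>0^2 / 4) per step. On the balls the implicit layer is a
  contraction with factor \<gamma>0, so Z and Q^-T are bounded and every gradient is of the size of the
  residual; the total displacement is then a geometric series in \<rho>, which the first hypothesis keeps
  inside the balls. The equilibrium is Lipschitz in (W, A) with a constant governed by \<kappa>, so by the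
  perturbation bound for singular values the second hypothesis keeps sigma_min (Z k) \<ge> \<alpha>0 / 2.
  Finally the update of b is a gradient step on the least-squares problem Z(k) b = y, which shrinks
  the residual by sqrt (1 - 3 \<eta> \<alpha>0^2 / 8), and by the third hypothesis the simultaneous change of
  the equilibrium does not destroy this contraction.\<close>

section \<open>Norms of matrices\<close>

lemma power2_norm_vec_eq_sum:
  "(norm (x::'a::real_normed_vector^'n))^2 = (\<Sum>i\<in>UNIV. (norm (x$i))^2)"
  unfolding norm_vec_def L2_set_def by (simp add: sum_nonneg)

lemma power2_norm_real_vec_eq_sum: "(norm (x::real^'n))^2 = (\<Sum>i\<in>UNIV. (x$i)^2)"
  by (simp add: power2_norm_vec_eq_sum)

lemma power2_norm_matrix_eq_sum: "(norm (M::real^'c^'r))^2 = (\<Sum>i\<in>UNIV. \<Sum>j\<in>UNIV. (M$i$j)^2)"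
  by (simp add: power2_norm_vec_eq_sum)

lemma frob_eq_norm: "frob M = norm M"
  unfolding frob_def by (metis power2_norm_matrix_eq_sum norm_ge_zero real_sqrt_unique)

lemma sum_UNIV_prod:
  "(\<Sum>p\<in>(UNIV::('a::finite \<times> 'b::finite) set). f p) = (\<Sum>a\<in>UNIV. \<Sum>b\<in>UNIV. f (a, b))"
  by (simp add: sum.cartesian_product)

lemma norm_vecm: "norm (vecm M) = norm M"
proof -
  have "(norm (vecm M))^2 = (norm M)^2"
    unfolding power2_norm_real_vec_eq_sum power2_norm_matrix_eq_sum sum_UNIV_prod vecm_def
    by simp (rule sum.swap)
  thus ?thesis by (simp add: power2_eq_iff_nonneg)
qed

lemma vecm_diff: "vecm (M - M') = vecm M - vecm M'"
  by (simp add: vecm_def vec_eq_iff)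

lemma ex_vecm: "\<exists>Y. x = vecm (Y::real^'c^'r)"
  by (rule exI[of _ "\<chi> r c. x $ (c, r)"]) (simp add: vecm_def vec_eq_iff)

lemma norm_transpose: "norm (transpose (M::real^'c^'r)) = norm M"
proof -
  have "(norm (transpose M))^2 = (norm M)^2"
    unfolding power2_norm_matrix_eq_sum transpose_def by simp (rule sum.swap)
  thus ?thesis by (simp add: power2_eq_iff_nonneg)
qed

lemma norm_colmat: "norm (colmat v) = norm v"
proof -
  have "(norm (colmat v))^2 = (norm v)^2"
    unfolding power2_norm_matrix_eq_sum power2_norm_real_vec_eq_sum by (simp add: colmat_def)
  thus ?thesis by (simp add: power2_eq_iff_nonneg)
qed

lemma norm_matrix_vector_le: "norm ((M::real^'c^'r) *v x) \<le> norm M * norm x"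
proof -
  have "(norm (M *v x))^2 = (\<Sum>i\<in>UNIV. (inner (M$i) x)^2)"
    by (simp add: power2_norm_real_vec_eq_sum matrix_vector_mul_component)
  also have "\<dots> \<le> (\<Sum>i\<in>UNIV. (norm (M$i))^2 * (norm x)^2)"
  proof (rule sum_mono)
    fix i
    have "\<bar>inner (M$i) x\<bar>^2 \<le> (norm (M$i) * norm x)^2"
      by (rule power_mono[OF Cauchy_Schwarz_ineq2]) simp
    thus "(inner (M$i) x)^2 \<le> (norm (M$i))^2 * (norm x)^2" by (simp add: power_mult_distrib)
  qed
  also have "\<dots> = (norm M * norm x)^2"
    by (simp add: power2_norm_vec_eq_sum[of M] sum_distrib_right power_mult_distrib)
  finally show ?thesis by (simp add: power2_le_iff_abs_le)
qed

lemma norm_matrix_vector_le_specnorm: "norm ((M::real^'c^'r) *v x) \<le> specnorm M * norm x"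
  unfolding specnorm_def by (rule onorm) simp

lemma specnorm_nonneg: "0 \<le> specnorm (M::real^'c^'r)"
  unfolding specnorm_def by (rule onorm_pos_le) simp

lemma specnorm_le_norm: "specnorm (M::real^'c^'r) \<le> norm M"
  unfolding specnorm_def by (rule onorm_le) (simp add: norm_matrix_vector_le)

lemma specnorm_triangle: "specnorm ((M::real^'c^'r) + M') \<le> specnorm M + specnorm M'"
  unfolding specnorm_def matrix_vector_mult_add_rdistrib by (rule onorm_triangle) simp_all

lemma specnorm_transpose_le: "specnorm (transpose (M::real^'c^'r)) \<le> specnorm M"
  unfolding specnorm_def[of "transpose M"]
proof (rule onorm_le)
  fix x :: "real^'r"
  have "(norm (transpose M *v x))^2 = inner (M *v (transpose M *v x)) x"
    by (simp add: power2_norm_eq_inner dot_lmul_matrix vector_transpose_matrix inner_commute)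
  also have "\<dots> \<le> specnorm M * norm (transpose M *v x) * norm x"
    by (rule order_trans[OF norm_cauchy_schwarz mult_right_mono[OF norm_matrix_vector_le_specnorm]])
      simp
  finally have "norm (transpose M *v x) * norm (transpose M *v x)
      \<le> (specnorm M * norm x) * norm (transpose M *v x)"
    by (simp add: power2_eq_square algebra_simps)
  thus "norm (transpose M *v x) \<le> specnorm M * norm x"
    using specnorm_nonneg[of M]
    by (cases "transpose M *v x = 0") (auto dest: mult_right_le_imp_le)
qed

lemma specnorm_transpose: "specnorm (transpose (M::real^'c^'r)) = specnorm M"
  by (metis antisym specnorm_transpose_le transpose_transpose)

lemma transpose_diff: "transpose ((M::real^'c^'r) - M') = transpose M - transpose M'"
  by (simp add: vec_eq_iff transpose_def)

lemma matrix_mult_diff_rdistrib: "((M::real^'k^'r) - M') ** (N::real^'c^'k) = M ** N - M' ** N"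
  by (simp add: vec_eq_iff matrix_matrix_mult_def sum_subtractf algebra_simps)

lemma matrix_mult_diff_ldistrib: "(M::real^'k^'r) ** ((N::real^'c^'k) - N') = M ** N - M ** N'"
  by (simp add: vec_eq_iff matrix_matrix_mult_def sum_subtractf algebra_simps)

lemma norm_matrix_mult_le_specnorm: "norm ((M::real^'k^'r) ** (N::real^'c^'k)) \<le> norm M * specnorm N"
proof -
  have row: "(M ** N) $ i = transpose N *v (M $ i)" for i
    by (simp add: vec_eq_iff matrix_matrix_mult_def matrix_vector_mult_def transpose_def mult.commute)
  have "(norm (M ** N))^2 = (\<Sum>i\<in>UNIV. (norm (transpose N *v (M$i)))^2)"
    by (simp add: power2_norm_vec_eq_sum[of "M ** N"] row)
  also have "\<dots> \<le> (\<Sum>i\<in>UNIV. (specnorm N)^2 * (norm (M$i))^2)"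
  proof (rule sum_mono)
    fix i
    have "(norm (transpose N *v (M$i)))^2 \<le> (specnorm N * norm (M$i))^2"
      using norm_matrix_vector_le_specnorm[of "transpose N" "M$i"]
      by (intro power_mono) (simp_all add: specnorm_transpose)
    thus "(norm (transpose N *v (M$i)))^2 \<le> (specnorm N)^2 * (norm (M$i))^2"
      by (simp add: power_mult_distrib)
  qed
  also have "\<dots> = (norm M * specnorm N)^2"
    by (simp add: power2_norm_vec_eq_sum[of M] sum_distrib_left power_mult_distrib mult.commute)
  finally show ?thesis
    using specnorm_nonneg[of N] by (simp add: power2_le_iff_abs_le)
qed

lemma norm_matrix_mult_le: "norm ((M::real^'k^'r) ** (N::real^'c^'k)) \<le> norm M * norm N"
  by (meson norm_matrix_mult_le_specnorm specnorm_le_norm mult_left_mono norm_ge_zero order_trans)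

section \<open>The equilibrium of the implicit layer\<close>

lemma norm_relu_diff_le: "norm (relu M - relu M') \<le> norm (M - M')"
proof (rule norm_le_componentwise_cart)
  fix i
  show "norm ((relu M - relu M') $ i) \<le> norm ((M - M') $ i)"
    by (rule norm_le_componentwise_cart) (simp add: relu_def)
qed

lemma norm_relu_le: "norm (relu (M::real^'c^'r)) \<le> norm M"
proof -
  have "relu (0::real^'c^'r) = 0" by (simp add: relu_def vec_eq_iff)
  thus ?thesis using norm_relu_diff_le[of M 0] by simp
qed

lemma norm_Phi_diff_le: "norm (Phi X W - Phi X W') \<le> norm X * specnorm (W - W')"
  unfolding Phi_def
  by (rule order_trans[OF norm_relu_diff_le])
    (metis matrix_mult_diff_ldistrib norm_matrix_mult_le_specnorm)

lemma norm_Phi_le: "norm (Phi X W) \<le> norm X * specnorm W"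
  unfolding Phi_def using norm_relu_le norm_matrix_mult_le_specnorm order_trans by blast

lemma ex1_is_equil:
  assumes "0 \<le> \<gamma>" "\<gamma> * specnorm A < 1"
  shows "\<exists>!Z. is_equil \<gamma> X W A Z"
proof -
  let ?f = "\<lambda>Z. relu (\<gamma> *\<^sub>R (Z ** A) + Phi X W)"
  have "\<exists>!Z. ?f Z = Z"
  proof (rule banach_fix_type)
    show "0 \<le> \<gamma> * specnorm A" using assms specnorm_nonneg[of A] by simp
    show "\<forall>x y. dist (?f x) (?f y) \<le> \<gamma> * specnorm A * dist x y"
    proof (intro allI)
      fix x y :: "real^'a^'b"
      have "dist (?f x) (?f y) \<le> norm (\<gamma> *\<^sub>R (x ** A) - \<gamma> *\<^sub>R (y ** A))"
        unfolding dist_norm using norm_relu_diff_le by (metis add_diff_cancel_right)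
      also have "\<dots> = \<gamma> * norm ((x - y) ** A)"
        using assms(1) by (simp add: matrix_mult_diff_rdistrib scaleR_diff_right[symmetric])
      also have "\<dots> \<le> \<gamma> * (norm (x - y) * specnorm A)"
        by (rule mult_left_mono[OF norm_matrix_mult_le_specnorm assms(1)])
      finally show "dist (?f x) (?f y) \<le> \<gamma> * specnorm A * dist x y"
        by (simp add: dist_norm mult_ac)
    qed
  qed fact
  thus ?thesis unfolding is_equil_def by metis
qed

lemma Zeq_fixpoint:
  assumes "0 \<le> \<gamma>" "\<gamma> * specnorm A < 1"
  shows "Zeq \<gamma> X W A = relu (\<gamma> *\<^sub>R (Zeq \<gamma> X W A ** A) + Phi X W)"
  using theI'[OF ex1_is_equil[OF assms, of X W]] unfolding Zeq_def is_equil_def by blast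

lemma Zeq_norm_le:
  assumes "0 \<le> \<gamma>" "\<gamma> * specnorm A < 1"
  shows "(1 - \<gamma> * specnorm A) * norm (Zeq \<gamma> X W A) \<le> norm X * specnorm W"
proof -
  let ?Z = "Zeq \<gamma> X W A"
  have "norm ?Z \<le> norm (\<gamma> *\<^sub>R (?Z ** A) + Phi X W)"
    using Zeq_fixpoint[OF assms] norm_relu_le by metis
  also have "\<dots> \<le> \<gamma> * norm (?Z ** A) + norm (Phi X W)"
    using norm_triangle_ineq assms(1) by (metis abs_of_nonneg norm_scaleR)
  also have "\<dots> \<le> \<gamma> * (norm ?Z * specnorm A) + norm X * specnorm W"
    by (intro add_mono mult_left_mono norm_matrix_mult_le_specnorm norm_Phi_le assms(1))
  finally show ?thesis by (simp add: algebra_simps)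
qed

lemma Zeq_diff_le:
  assumes "0 \<le> \<gamma>" "\<gamma> * specnorm A < 1" "\<gamma> * specnorm A' < 1"
  shows "(1 - \<gamma> * specnorm A') * norm (Zeq \<gamma> X W A - Zeq \<gamma> X W' A')
     \<le> \<gamma> * norm (Zeq \<gamma> X W A) * specnorm (A - A') + norm X * specnorm (W - W')"
proof -
  let ?Z = "Zeq \<gamma> X W A" and ?Z' = "Zeq \<gamma> X W' A'"
  have "norm (?Z - ?Z')
      \<le> norm ((\<gamma> *\<^sub>R (?Z ** A) + Phi X W) - (\<gamma> *\<^sub>R (?Z' ** A') + Phi X W'))"
    using Zeq_fixpoint[OF assms(1,2)] Zeq_fixpoint[OF assms(1,3)] norm_relu_diff_le by metis
  also have "(\<gamma> *\<^sub>R (?Z ** A) + Phi X W) - (\<gamma> *\<^sub>R (?Z' ** A') + Phi X W')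
     = \<gamma> *\<^sub>R ((?Z - ?Z') ** A') + \<gamma> *\<^sub>R (?Z ** (A - A')) + (Phi X W - Phi X W')"
    by (simp add: matrix_mult_diff_rdistrib matrix_mult_diff_ldistrib algebra_simps)
  also have "norm \<dots> \<le> \<gamma> * (norm (?Z - ?Z') * specnorm A') + \<gamma> * (norm ?Z * specnorm (A - A'))
      + norm X * specnorm (W - W')"
    using assms(1)
    by (intro norm_triangle_le add_mono norm_Phi_diff_le)
      (auto intro!: mult_left_mono norm_matrix_mult_le_specnorm)
  finally show ?thesis by (simp add: algebra_simps)
qed

section \<open>The smallest singular value\<close>

definition real_eigenvalues :: "real^'n^'n \<Rightarrow> real set" where
  "real_eigenvalues S = {\<mu>. \<exists>v. v \<noteq> 0 \<and> S *v v = \<mu> *\<^sub>R v}"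

lemma lambda_min_eq_Min: "lambda_min S = Min (real_eigenvalues S)"
  unfolding lambda_min_def real_eigenvalues_def ..

lemma inner_symmetric_matrix:
  assumes "transpose S = S"
  shows "inner x (S *v y) = inner (S *v x) (y::real^'n)"
proof -
  have "inner x (S *v y) = inner (transpose S *v x) y"
    by (simp add: dot_lmul_matrix[symmetric])
  thus ?thesis using assms by simp
qed

lemma finite_real_eigenvalues:
  assumes sym: "transpose S = S"
  shows "finite (real_eigenvalues S)"
proof -
  define f where "f \<mu> = (SOME v. v \<noteq> 0 \<and> S *v v = \<mu> *\<^sub>R v)" for \<mu>
  have f: "f \<mu> \<noteq> 0 \<and> S *v f \<mu> = \<mu> *\<^sub>R f \<mu>" if "\<mu> \<in> real_eigenvalues S" for \<mu>
  proof -
    from that obtain v where "v \<noteq> 0 \<and> S *v v = \<mu> *\<^sub>R v"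
      unfolding real_eigenvalues_def by auto
    thus ?thesis unfolding f_def by (rule someI)
  qed
  have inj: "inj_on f (real_eigenvalues S)"
  proof (rule inj_onI)
    fix a b assume a: "a \<in> real_eigenvalues S" and b: "b \<in> real_eigenvalues S" and "f a = f b"
    hence "a *\<^sub>R f a = b *\<^sub>R f a" using f by metis
    thus "a = b" using f[OF a] by simp
  qed
  \<comment> \<open>eigenvectors of distinct eigenvalues of a symmetric matrix are orthogonal\<close>
  have "independent (f ` real_eigenvalues S)"
  proof (rule pairwise_orthogonal_independent)
    show "0 \<notin> f ` real_eigenvalues S" using f by auto
    show "pairwise orthogonal (f ` real_eigenvalues S)"
    proof (clarsimp simp: pairwise_def orthogonal_def)
      fix a b assume a: "a \<in> real_eigenvalues S" and b: "b \<in> real_eigenvalues S" and "f a \<noteq> f b"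
      hence "a \<noteq> b" by auto
      have "b * inner (f a) (f b) = inner (f a) (S *v f b)" using f[OF b] by simp
      also have "\<dots> = inner (S *v f a) (f b)" by (rule inner_symmetric_matrix[OF sym])
      also have "\<dots> = a * inner (f a) (f b)" using f[OF a] by simp
      finally show "inner (f a) (f b) = 0" using \<open>a \<noteq> b\<close> by simp
    qed
  qed
  hence "finite (f ` real_eigenvalues S)" by (rule finiteI_independent)
  thus ?thesis using inj finite_imageD by blast
qed

lemma linear_coeff_zero_if_quadratic_nonneg:
  fixes a c :: real
  assumes "\<And>t. 0 \<le> 2 * t * a + t^2 * c"
  shows "a = 0"
proof (rule ccontr)
  assume "a \<noteq> 0"
  define k where "k = \<bar>c\<bar> + 1"
  have k: "k > 0" "c \<le> k - 1" unfolding k_def by auto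
  have "0 \<le> (2 * (-a/k) * a + (-a/k)^2 * c) * k^2" using assms[of "-a/k"] by simp
  also have "\<dots> = -2*a^2*k + a^2 * c" using k by (simp add: field_simps power2_eq_square)
  also have "\<dots> \<le> -2*a^2*k + a^2*(k-1)" using k by (simp add: mult_left_mono)
  also have "\<dots> < 0" using k \<open>a \<noteq> 0\<close> by (simp add: algebra_simps) (smt (verit) mult_pos_pos zero_less_power2)
  finally show False by simp
qed

lemma rayleigh_quotient_attains_min:
  fixes S :: "real^'n^'n"
  obtains v where "norm v = 1" "\<And>x. inner v (S *v v) * (norm x)^2 \<le> inner x (S *v x)"
proof -
  have "\<exists>v\<in>sphere (0::real^'n) 1. \<forall>y\<in>sphere 0 1. inner v (S *v v) \<le> inner y (S *v y)"
    by (rule continuous_attains_inf) (auto intro!: continuous_intros compact_sphere)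
  then obtain v where v: "norm v = 1"
    and vmin: "\<And>y. norm y = 1 \<Longrightarrow> inner v (S *v v) \<le> inner y (S *v y)"
    by auto
  have "inner v (S *v v) * (norm x)^2 \<le> inner x (S *v x)" for x :: "real^'n"
  proof (cases "x = 0")
    case False
    have "inner v (S *v v) \<le> inner ((1 / norm x) *\<^sub>R x) (S *v ((1 / norm x) *\<^sub>R x))"
      using vmin[of "(1 / norm x) *\<^sub>R x"] False by (simp only: norm_scaleR) simp
    also have "\<dots> = inner x (S *v x) / (norm x)^2"
      by (simp add: matrix_vector_mult_scaleR power2_eq_square)
    finally show ?thesis using False by (simp add: field_simps)
  qed simp
  thus ?thesis by (rule that[OF v])
qed

text \<open>The first variation of the Rayleigh quotient at its minimiser v vanishes in every direction
  w, which forces S v - \<mu> v = 0.\<close>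
lemma rayleigh_minimiser_eigenvector:
  fixes S :: "real^'n^'n"
  assumes sym: "transpose S = S" and v: "norm v = 1"
    and rayleigh: "\<And>x. inner v (S *v v) * (norm x)^2 \<le> inner x (S *v x)"
  shows "S *v v = inner v (S *v v) *\<^sub>R v"
proof -
  define \<mu> where "\<mu> = inner v (S *v v)"
  define w where "w = S *v v - \<mu> *\<^sub>R v"
  have vv: "inner v v = 1" using v by (simp add: power2_norm_eq_inner[symmetric])
  have wv: "inner w v = 0"
    unfolding w_def \<mu>_def using vv by (simp add: inner_diff_left inner_diff_right inner_commute)
  have wSv: "inner w (S *v v) = inner w w"
    using wv unfolding w_def by (simp add: inner_diff_right inner_diff_left)
  have "0 \<le> 2 * t * inner w w + t^2 * (inner w (S *v w) - \<mu> * inner w w)" for t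
  proof -
    have "0 \<le> inner (v + t *\<^sub>R w) (S *v (v + t *\<^sub>R w)) - \<mu> * (norm (v + t *\<^sub>R w))^2"
      using rayleigh[of "v + t *\<^sub>R w"] unfolding \<mu>_def by simp
    moreover have "inner (v + t *\<^sub>R w) (S *v (v + t *\<^sub>R w))
        = \<mu> + 2 * t * inner w (S *v v) + t^2 * inner w (S *v w)"
      using inner_symmetric_matrix[OF sym, of v w] unfolding \<mu>_def
      by (simp add: matrix_vector_right_distrib matrix_vector_mult_scaleR inner_add_left
          inner_add_right power2_eq_square inner_commute algebra_simps)
    moreover have "(norm (v + t *\<^sub>R w))^2 = 1 + 2 * t * inner w v + t^2 * inner w w"
      unfolding power2_norm_eq_inner using vv
      by (simp add: inner_add_left inner_add_right inner_commute power2_eq_square algebra_simps)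
    ultimately show ?thesis unfolding wv wSv by (simp add: algebra_simps)
  qed
  hence "inner w w = 0" by (rule linear_coeff_zero_if_quadratic_nonneg)
  thus ?thesis unfolding w_def \<mu>_def by simp
qed

lemma symmetric_matrix_min_eigenvalue:
  fixes S :: "real^'n^'n"
  assumes "transpose S = S"
  shows "\<exists>v \<mu>. v \<noteq> 0 \<and> S *v v = \<mu> *\<^sub>R v \<and> (\<forall>x::real^'n. \<mu> * (norm x)^2 \<le> inner x (S *v x))"
proof -
  obtain v :: "real^'n" where "norm v = 1"
    and "\<And>x. inner v (S *v v) * (norm x)^2 \<le> inner x (S *v x)"
    using rayleigh_quotient_attains_min[of S] by blast
  thus ?thesis using rayleigh_minimiser_eigenvector[OF assms]
    by (intro exI[of _ v] exI[of _ "inner v (S *v v)"]) auto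
qed

lemma lambda_min_in_real_eigenvalues:
  assumes "transpose S = S"
  shows "lambda_min S \<in> real_eigenvalues S"
  unfolding lambda_min_eq_Min
  using symmetric_matrix_min_eigenvalue[OF assms] finite_real_eigenvalues[OF assms]
  by (intro Min_in) (auto simp: real_eigenvalues_def)

lemma lambda_min_le_rayleigh:
  fixes S :: "real^'n^'n"
  assumes "transpose S = S"
  shows "lambda_min S * (norm x)^2 \<le> inner x (S *v x)"
proof -
  obtain v \<mu> where "v \<noteq> 0" "S *v v = \<mu> *\<^sub>R v"
    and rayleigh: "\<And>x::real^'n. \<mu> * (norm x)^2 \<le> inner x (S *v x)"
    using symmetric_matrix_min_eigenvalue[OF assms] by blast
  hence "\<mu> \<in> real_eigenvalues S" unfolding real_eigenvalues_def by blast
  hence "lambda_min S \<le> \<mu>"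
    unfolding lambda_min_eq_Min using finite_real_eigenvalues[OF assms] by simp
  hence "lambda_min S * (norm x)^2 \<le> \<mu> * (norm x)^2" by (simp add: mult_right_mono)
  thus ?thesis using rayleigh[of x] by linarith
qed

lemma inner_mult_transpose: "inner x ((Z ** transpose Z) *v x) = (norm (transpose Z *v x))^2"
  for Z :: "real^'m^'n"
proof -
  have "inner x ((Z ** transpose Z) *v x) = inner x (Z *v (transpose Z *v x))"
    by (simp only: matrix_vector_mul_assoc)
  also have "\<dots> = inner (x v* Z) (transpose Z *v x)" by (rule dot_lmul_matrix[symmetric])
  finally show ?thesis by (simp add: power2_norm_eq_inner)
qed

lemma symmetric_mult_transpose: "transpose (Z ** transpose Z) = Z ** transpose (Z::real^'m^'n)"
  by (simp add: matrix_transpose_mul)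

lemma lambda_min_mult_transpose_attained:
  fixes Z :: "real^'m^'n"
  obtains v where "v \<noteq> 0" "lambda_min (Z ** transpose Z) * (norm v)^2 = (norm (transpose Z *v v))^2"
proof -
  obtain v where "v \<noteq> 0" "(Z ** transpose Z) *v v = lambda_min (Z ** transpose Z) *\<^sub>R v"
    using lambda_min_in_real_eigenvalues[OF symmetric_mult_transpose[of Z]]
    unfolding real_eigenvalues_def by auto
  thus ?thesis
    using that inner_mult_transpose[of v Z] by (simp add: power2_norm_eq_inner)
qed

lemma lambda_min_mult_transpose_nonneg: "0 \<le> lambda_min (Z ** transpose (Z::real^'m^'n))"
proof -
  obtain v where "v \<noteq> 0" "lambda_min (Z ** transpose Z) * (norm v)^2 = (norm (transpose Z *v v))^2"
    by (rule lambda_min_mult_transpose_attained)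
  moreover have "0 < (norm v)^2" using \<open>v \<noteq> 0\<close> by simp
  ultimately show ?thesis by (metis zero_le_power2 zero_le_mult_iff not_le)
qed

lemma sigma_min_nonneg: "0 \<le> sigma_min (Z::real^'m^'n)"
  unfolding sigma_min_def using lambda_min_mult_transpose_nonneg by simp

lemma sigma_min_mult_norm_le: "sigma_min Z * norm x \<le> norm (transpose Z *v x)"
  for Z :: "real^'m^'n"
proof -
  have "(sigma_min Z * norm x)^2 = lambda_min (Z ** transpose Z) * (norm x)^2"
    unfolding sigma_min_def using lambda_min_mult_transpose_nonneg[of Z]
    by (simp add: power_mult_distrib)
  also have "\<dots> \<le> (norm (transpose Z *v x))^2"
    using lambda_min_le_rayleigh[OF symmetric_mult_transpose[of Z], of x]
    by (simp add: inner_mult_transpose)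
  finally show ?thesis by (simp add: power2_le_iff_abs_le)
qed

lemma sigma_min_attained:
  fixes Z :: "real^'m^'n"
  obtains v where "v \<noteq> 0" "norm (transpose Z *v v) = sigma_min Z * norm v"
proof -
  obtain v where v: "v \<noteq> 0"
    and e: "lambda_min (Z ** transpose Z) * (norm v)^2 = (norm (transpose Z *v v))^2"
    by (rule lambda_min_mult_transpose_attained)
  have "(norm (transpose Z *v v))^2 = (sigma_min Z * norm v)^2"
    unfolding sigma_min_def e[symmetric] using lambda_min_mult_transpose_nonneg[of Z]
    by (simp add: power_mult_distrib)
  hence "norm (transpose Z *v v) = sigma_min Z * norm v"
    by (simp add: power2_eq_iff_nonneg sigma_min_nonneg)
  thus ?thesis using that v by blast
qed

lemma sigma_min_le_norm: "sigma_min (Z::real^'m^'n) \<le> norm Z"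
proof -
  obtain v where "v \<noteq> 0" "norm (transpose Z *v v) = sigma_min Z * norm v"
    by (rule sigma_min_attained)
  moreover have "norm (transpose Z *v v) \<le> norm Z * norm v"
    using norm_matrix_vector_le[of "transpose Z" v] by (simp add: norm_transpose)
  ultimately show ?thesis by simp
qed

lemma sigma_min_diff_le: "sigma_min (Z::real^'m^'n) - norm (Z - Z') \<le> sigma_min Z'"
proof -
  obtain v where v: "v \<noteq> 0" "norm (transpose Z' *v v) = sigma_min Z' * norm v"
    by (rule sigma_min_attained)
  have "transpose Z *v v = transpose Z' *v v + transpose (Z - Z') *v v"
    by (simp add: transpose_def matrix_vector_mult_def vec_eq_iff sum.distrib[symmetric] algebra_simps)
  hence "norm (transpose Z *v v) \<le> sigma_min Z' * norm v + norm (Z - Z') * norm v"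
    using norm_triangle_ineq v(2) norm_matrix_vector_le[of "transpose (Z - Z')" v]
      norm_transpose[of "Z - Z'"]
    by (smt (verit))
  hence "(sigma_min Z - norm (Z - Z')) * norm v \<le> sigma_min Z' * norm v"
    using sigma_min_mult_norm_le[of Z v] by (simp add: algebra_simps)
  thus ?thesis using v(1) by simp
qed

section \<open>Bounds on the gradients\<close>

lemma kron_transpose_vecm:
  "transpose (kron (P::real^'q^'p) (R::real^'s^'r)) *v vecm (Y::real^'p^'r)
     = vecm (transpose R ** Y ** P)"
proof -
  have "(transpose (kron P R) *v vecm Y) $ (j1, j2) = vecm (transpose R ** Y ** P) $ (j1, j2)"
    for j1 j2
  proof -
    have "(transpose (kron P R) *v vecm Y) $ (j1, j2)
        = (\<Sum>i1\<in>UNIV. \<Sum>i2\<in>UNIV. P$i1$j1 * R$i2$j2 * Y$i2$i1)"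
      by (simp add: matrix_vector_mult_def transpose_def kron_def vecm_def sum_UNIV_prod)
    also have "\<dots> = (\<Sum>i1\<in>UNIV. \<Sum>i2\<in>UNIV. R$i2$j2 * Y$i2$i1 * P$i1$j1)"
      by (simp add: mult_ac)
    also have "\<dots> = vecm (transpose R ** Y ** P) $ (j1, j2)"
      by (simp add: vecm_def matrix_matrix_mult_def transpose_def sum_distrib_right)
    finally show ?thesis .
  qed
  thus ?thesis by (simp add: vec_eq_iff)
qed

lemma norm_diagm_mult_le:
  assumes "\<And>i. \<bar>v $ i\<bar> \<le> 1"
  shows "norm (diagm v *v (x::real^'n)) \<le> norm x"
proof (rule norm_le_componentwise_cart)
  fix i
  have "(diagm v *v x) $ i = v $ i * x $ i"
    by (simp add: diagm_def matrix_vector_mult_def if_distrib[of "\<lambda>a. a * _"] cong: if_cong)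
  thus "norm ((diagm v *v x) $ i) \<le> norm (x $ i)"
    using assms[of i] by (simp add: abs_mult mult_left_le_one_le)
qed

lemma transpose_diagm: "transpose (diagm v) = diagm v"
  by (simp add: vec_eq_iff transpose_def diagm_def)

lemma transpose_Dm: "transpose (Dm \<gamma> X W A) = Dm \<gamma> X W A"
  by (simp add: Dm_def transpose_diagm)

lemma transpose_Em: "transpose (Em X W) = Em X W"
  by (simp add: Em_def transpose_diagm)

lemma norm_Dm_mult_le: "norm (Dm \<gamma> X W A *v x) \<le> norm x"
  unfolding Dm_def by (rule norm_diagm_mult_le) (simp add: vecm_def relu'_def)

lemma norm_Em_mult_le: "norm (Em X W *v x) \<le> norm x"
  unfolding Em_def by (rule norm_diagm_mult_le) (simp add: vecm_def relu'_def)

lemma Qm_transpose_lower_bound: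
  fixes X :: "real^'d^'N" and W :: "real^'m^'d" and A :: "real^'m^'m"
  assumes "0 \<le> \<gamma>"
  shows "(1 - \<gamma> * specnorm A) * norm x \<le> norm (transpose (Qm \<gamma> X W A) *v x)"
proof -
  let ?D = "Dm \<gamma> X W A" and ?K = "kron (transpose A) (mat 1 :: real^'N^'N)"
  have QT: "transpose (Qm \<gamma> X W A) *v x = x - \<gamma> *\<^sub>R (transpose ?K *v (?D *v x))"
    unfolding Qm_def transpose_diff transpose_scalar matrix_transpose_mul transpose_mat transpose_Dm
    by (simp only: matrix_vector_mult_diff_rdistrib matrix_vector_mul_lid
        scaleR_matrix_vector_assoc[symmetric] matrix_vector_mul_assoc[symmetric])
  obtain Y :: "real^'m^'N" where Y: "?D *v x = vecm Y" using ex_vecm by blast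
  have "norm (transpose ?K *v (?D *v x)) = norm (Y ** transpose A)"
    unfolding Y kron_transpose_vecm by (simp add: norm_vecm)
  also have "\<dots> \<le> norm (?D *v x) * specnorm A"
    using norm_matrix_mult_le_specnorm[of Y "transpose A"]
    by (simp add: Y norm_vecm specnorm_transpose)
  also have "\<dots> \<le> norm x * specnorm A"
    by (rule mult_right_mono[OF norm_Dm_mult_le specnorm_nonneg])
  finally have "norm (\<gamma> *\<^sub>R (transpose ?K *v (?D *v x))) \<le> \<gamma> * (norm x * specnorm A)"
    using assms by (simp add: mult_left_mono)
  moreover have "norm x \<le> norm (transpose (Qm \<gamma> X W A) *v x)
      + norm (\<gamma> *\<^sub>R (transpose ?K *v (?D *v x)))"
    unfolding QT by (metis diff_add_cancel norm_triangle_ineq)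
  ultimately show ?thesis by (simp add: algebra_simps)
qed

lemma matrix_inv_right:
  assumes "invertible (M::real^'n^'n)"
  shows "M ** matrix_inv M = mat 1"
  using assms unfolding invertible_def matrix_inv_def by (rule someI_ex[THEN conjunct1])

lemma norm_backprop_le:
  fixes X :: "real^'d^'N" and W :: "real^'m^'d" and A :: "real^'m^'m"
  assumes "0 \<le> \<gamma>" "\<gamma> * specnorm A < 1"
  shows "(1 - \<gamma> * specnorm A) * norm (backprop \<gamma> X y W A b) \<le> norm b * norm (yhat \<gamma> X W A b - y)"
proof -
  let ?QT = "transpose (Qm \<gamma> X W A)"
  let ?u = "transpose (kron (transpose (colmat b)) (mat 1 :: real^'N^'N))
      *v vecm (colmat (yhat \<gamma> X W A b - y))"
  have "inj ((*v) ?QT)"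
  proof (rule injI)
    fix x1 x2 assume "?QT *v x1 = ?QT *v x2"
    hence "?QT *v (x1 - x2) = 0" by (simp only: matrix_vector_mult_diff_distrib diff_self)
    moreover have "(1 - \<gamma> * specnorm A) * norm (x1 - x2) \<le> norm (?QT *v (x1 - x2))"
      by (rule Qm_transpose_lower_bound[OF assms(1)])
    ultimately have "(1 - \<gamma> * specnorm A) * norm (x1 - x2) \<le> 0" by simp
    thus "x1 = x2" using assms(2) by (simp add: mult_le_0_iff)
  qed
  hence "invertible ?QT"
    using matrix_left_invertible_injective invertible_left_inverse by blast
  hence "?QT ** matrix_inv ?QT = mat 1" by (rule matrix_inv_right)
  hence "?QT *v (matrix_inv ?QT *v z) = z" for z
    by (simp only: matrix_vector_mul_assoc matrix_vector_mul_lid)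
  hence QT_backprop: "?QT *v backprop \<gamma> X y W A b = ?u"
    unfolding backprop_def .
  have "(1 - \<gamma> * specnorm A) * norm (backprop \<gamma> X y W A b) \<le> norm ?u"
    unfolding QT_backprop[symmetric] by (rule Qm_transpose_lower_bound[OF assms(1)])
  also have "norm ?u \<le> norm b * norm (yhat \<gamma> X W A b - y)"
  proof -
    have "norm ?u = norm (colmat (yhat \<gamma> X W A b - y) ** transpose (colmat b))"
      unfolding kron_transpose_vecm transpose_mat matrix_mul_lid norm_vecm ..
    also have "\<dots> \<le> norm (colmat (yhat \<gamma> X W A b - y)) * norm (transpose (colmat b))"
      by (rule norm_matrix_mult_le)
    finally show ?thesis by (simp add: norm_colmat norm_transpose mult.commute)
  qed
  finally show ?thesis .
qed

lemma norm_gradW_le: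
  fixes X :: "real^'d^'N" and W :: "real^'m^'d" and A :: "real^'m^'m"
  shows "norm (gradW \<gamma> X y W A b) \<le> norm X * norm (backprop \<gamma> X y W A b)"
proof -
  let ?v = "Em X W *v (Dm \<gamma> X W A *v backprop \<gamma> X y W A b)"
  obtain Y :: "real^'m^'N" where Y: "?v = vecm Y" using ex_vecm by blast
  have "gradW \<gamma> X y W A b = transpose (kron (mat 1 :: real^'m^'m) X) *v ?v"
    unfolding gradW_def matrix_transpose_mul transpose_Dm transpose_Em
    by (simp only: matrix_vector_mul_assoc)
  also have "\<dots> = vecm (transpose X ** Y)"
    unfolding Y kron_transpose_vecm by (simp only: matrix_mul_rid)
  finally have "norm (gradW \<gamma> X y W A b) \<le> norm X * norm Y"
    using norm_matrix_mult_le[of "transpose X" Y] by (simp add: norm_vecm norm_transpose)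
  also have "norm Y = norm ?v" by (simp add: Y norm_vecm)
  also have "\<dots> \<le> norm (backprop \<gamma> X y W A b)"
    by (rule order_trans[OF norm_Em_mult_le norm_Dm_mult_le])
  finally show ?thesis by (simp add: mult_left_mono)
qed

lemma norm_gradA_le:
  fixes X :: "real^'d^'N" and W :: "real^'m^'d" and A :: "real^'m^'m"
  assumes "0 \<le> \<gamma>"
  shows "norm (gradA \<gamma> X y W A b) \<le> \<gamma> * norm (Zeq \<gamma> X W A) * norm (backprop \<gamma> X y W A b)"
proof -
  let ?Z = "Zeq \<gamma> X W A" and ?v = "Dm \<gamma> X W A *v backprop \<gamma> X y W A b"
  obtain Y :: "real^'m^'N" where Y: "?v = vecm Y" using ex_vecm by blast
  have "gradA \<gamma> X y W A b = \<gamma> *\<^sub>R (transpose (kron (mat 1 :: real^'m^'m) ?Z) *v ?v)"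
    unfolding gradA_def matrix_transpose_mul transpose_Dm by (simp only: matrix_vector_mul_assoc)
  also have "\<dots> = \<gamma> *\<^sub>R vecm (transpose ?Z ** Y)"
    unfolding Y kron_transpose_vecm by (simp only: matrix_mul_rid)
  finally have "norm (gradA \<gamma> X y W A b) = \<gamma> * norm (transpose ?Z ** Y)"
    using assms by (simp add: norm_vecm)
  also have "\<dots> \<le> \<gamma> * (norm ?Z * norm Y)"
    using norm_matrix_mult_le[of "transpose ?Z" Y] assms
    by (simp add: norm_transpose mult_left_mono)
  also have "norm Y = norm ?v" by (simp add: Y norm_vecm)
  also have "\<dots> \<le> norm (backprop \<gamma> X y W A b)" by (rule norm_Dm_mult_le)
  finally show ?thesis using assms by (simp add: mult_left_mono mult.assoc)
qed

lemma norm_gradb_le: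
  "norm (gradb \<gamma> X y W A b) \<le> norm (Zeq \<gamma> X W A) * norm (yhat \<gamma> X W A b - y)"
  unfolding gradb_def using norm_matrix_vector_le[of "transpose (Zeq \<gamma> X W A)"]
  by (simp add: norm_transpose)

section \<open>Gradient descent\<close>

lemma norm_diff_le_geometric_sum:
  fixes V :: "nat \<Rightarrow> 'a::real_normed_vector"
  assumes "\<And>j. j < n \<Longrightarrow> norm (V (Suc j) - V j) \<le> c * q^j"
  shows "norm (V n - V 0) \<le> c * (\<Sum>j<n. q^j)"
proof -
  have "norm (V n - V 0) = norm (\<Sum>j<n. V (Suc j) - V j)" by (simp add: sum_lessThan_telescope)
  also have "\<dots> \<le> (\<Sum>j<n. norm (V (Suc j) - V j))" by (rule norm_sum)
  also have "\<dots> \<le> (\<Sum>j<n. c * q^j)" using assms by (intro sum_mono) auto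
  finally show ?thesis by (simp add: sum_distrib_left)
qed

lemma norm_least_squares_step_le:
  fixes Z :: "real^'m^'N" and r :: "real^'N"
  assumes "0 \<le> \<sigma>" "\<sigma> * norm r \<le> norm (transpose Z *v r)"
    and "0 \<le> \<eta>" "\<eta> * (norm Z)^2 \<le> 1/2"
  shows "norm (r - \<eta> *\<^sub>R (Z *v (transpose Z *v r))) \<le> sqrt (1 - 3/2 * \<eta> * \<sigma>^2) * norm r"
proof -
  define g where "g = transpose Z *v r"
  have expand: "(norm (r - \<eta> *\<^sub>R (Z *v g)))^2
      = (norm r)^2 - 2 * \<eta> * inner r (Z *v g) + \<eta>^2 * (norm (Z *v g))^2"
    unfolding power2_norm_eq_inner
    by (simp add: inner_diff_left inner_diff_right inner_commute algebra_simps power2_eq_square)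
  have "inner r (Z *v g) = (norm g)^2"
    by (simp add: dot_lmul_matrix[symmetric] power2_norm_eq_inner g_def)
  moreover have "\<eta>^2 * (norm (Z *v g))^2 \<le> \<eta> / 2 * (norm g)^2"
  proof -
    have "(norm (Z *v g))^2 \<le> (norm Z * norm g)^2"
      by (rule power_mono[OF norm_matrix_vector_le]) simp
    hence "\<eta>^2 * (norm (Z *v g))^2 \<le> \<eta>^2 * (norm Z * norm g)^2"
      by (rule mult_left_mono) simp
    also have "\<dots> = \<eta> * (\<eta> * (norm Z)^2) * (norm g)^2"
      by (simp add: power2_eq_square mult_ac)
    also have "\<dots> \<le> \<eta> * (1/2) * (norm g)^2"
      using assms(3,4) by (intro mult_right_mono mult_left_mono) auto
    finally show ?thesis by simp
  qed
  moreover have "\<eta> * (\<sigma>^2 * (norm r)^2) \<le> \<eta> * (norm g)^2"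
    using power_mono[OF assms(2)] assms(1,3) unfolding g_def
    by (simp add: mult_left_mono power_mult_distrib)
  ultimately have "(norm (r - \<eta> *\<^sub>R (Z *v g)))^2 \<le> (1 - 3/2 * \<eta> * \<sigma>^2) * (norm r)^2"
    unfolding expand by (simp add: algebra_simps)
  hence "norm (r - \<eta> *\<^sub>R (Z *v g)) \<le> sqrt ((1 - 3/2 * \<eta> * \<sigma>^2) * (norm r)^2)"
    by (rule real_le_rsqrt)
  thus ?thesis unfolding g_def by (simp add: real_sqrt_mult)
qed

lemma sqrt_contraction_le:
  fixes t :: real
  assumes "0 \<le> t" "t \<le> 2"
  shows "sqrt (1 - 3*t/8) + t/16 \<le> sqrt (1 - t/4)"
proof -
  have s: "sqrt (1 - 3*t/8) \<le> 1 - 3*t/16"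
    using assms by (intro real_le_lsqrt) (auto simp: power2_eq_square algebra_simps)
  have "(sqrt (1 - 3*t/8) + t/16)^2 = (1 - 3*t/8) + t/8 * sqrt (1 - 3*t/8) + t^2/256"
    using assms by (simp add: power2_eq_square algebra_simps)
  also have "\<dots> \<le> (1 - 3*t/8) + t/8 * (1 - 3*t/16) + t^2/256"
    using s assms by (simp add: mult_left_mono)
  also have "\<dots> \<le> 1 - t/4" using assms by (simp add: power2_eq_square algebra_simps)
  finally show ?thesis using assms by (intro real_le_rsqrt) auto
qed

lemma le_eight_one_minus_sqrt:
  fixes t :: real
  assumes "0 \<le> t" "t \<le> 4"
  shows "t \<le> 8 * (1 - sqrt (1 - t/4))"
proof -
  have "sqrt (1 - t/4) \<le> 1 - t/8"
    using assms by (intro real_le_lsqrt) (auto simp: power2_eq_square algebra_simps)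
  thus ?thesis by simp
qed

lemma step_size_bound:
  fixes \<eta> \<kappa> a c e g :: real
  assumes "0 < \<kappa>" "0 < a" "0 < c" "0 \<le> g"
    and "\<eta> * (a^4 * c^2 * e) < 2 * g * (\<kappa> * inverse ((\<kappa> * inverse (a^2) + inverse (c^2))^2))"
  shows "\<eta> * (a^2 * e) \<le> g / 2"
proof -
  define u where "u = \<kappa> * inverse (a^2)"
  define v where "v = inverse (c^2)"
  have "0 < u + v" unfolding u_def v_def using assms by (simp add: add_pos_pos)
  \<comment> \<open>AM-GM\<close>
  have "4 * (u * v) \<le> (u + v)^2"
    using zero_le_power2[of "u - v"] by (simp add: power2_eq_square algebra_simps)
  hence "4 * (u * v) * (a^2 * c^2) \<le> (u + v)^2 * (a^2 * c^2)"
    by (rule mult_right_mono) simp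
  moreover have "u * v * (a^2 * c^2) = \<kappa>"
    unfolding u_def v_def using assms(2,3) by (simp add: field_simps)
  ultimately have "\<kappa> \<le> a^2 * c^2 / 4 * (u + v)^2"
    by (simp add: algebra_simps)
  hence lambar: "\<kappa> * inverse ((u + v)^2) \<le> a^2 * c^2 / 4"
    using \<open>0 < u + v\<close> by (simp add: pos_divide_le_eq divide_inverse[symmetric])
  have "\<eta> * (a^2 * e) * (a^2 * c^2) = \<eta> * (a^4 * c^2 * e)"
    by (simp add: power2_eq_square power4_eq_xxxx mult_ac)
  also have "\<dots> < 2 * g * (\<kappa> * inverse ((u + v)^2))"
    using assms(5) unfolding u_def v_def .
  also have "\<dots> \<le> 2 * g * (a^2 * c^2 / 4)"
    using lambar assms(4) by (intro mult_left_mono) auto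
  also have "\<dots> = g / 2 * (a^2 * c^2)" by simp
  finally have "\<eta> * (a^2 * e) < g / 2"
    by (rule mult_right_less_imp_less) (use assms(2,3) in simp)
  thus ?thesis by simp
qed

locale implicit_gd =
  fixes X :: "real^'d^'N" and y :: "real^'N" and W :: "nat \<Rightarrow> real^'m^'d"
    and A :: "nat \<Rightarrow> real^'m^'m" and b :: "nat \<Rightarrow> real^'m"
    and \<gamma> \<eta> C1 C2 C3 \<alpha>0 lam1 lam2 lam3 \<gamma>0 \<kappa> r0 :: real
  assumes C_pos: "C1 > 0" "C2 > 0" "C3 > 0"
    and GD_W: "\<And>k. vecm (W (Suc k)) = vecm (W k) - \<eta> *\<^sub>R gradW \<gamma> X y (W k) (A k) (b k)"
    and GD_A: "\<And>k. vecm (A (Suc k)) = vecm (A k) - \<eta> *\<^sub>R gradA \<gamma> X y (W k) (A k) (b k)"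
    and GD_b: "\<And>k. b (Suc k) = b k - \<eta> *\<^sub>R gradb \<gamma> X y (W k) (A k) (b k)"
    and gamma_pos: "\<gamma> > 0" and eta_pos: "\<eta> > 0"
    and alpha0_def: "\<alpha>0 = sigma_min (Zeq \<gamma> X (W 0) (A 0))"
    and lam1_def: "lam1 = specnorm (W 0) + C1"
    and lam2_def: "lam2 = specnorm (A 0) + C2"
    and lam3_def: "lam3 = norm (b 0) + C3"
    and gamma0_def: "\<gamma>0 = \<gamma> * lam2" and gamma0_less_1: "\<gamma>0 < 1"
    and kappa_def: "\<kappa> = 1 + \<gamma>0^2 / (1 - \<gamma>0)^2 * (lam1^2 / lam2^2)"
    and r0_def: "r0 = norm (yhat \<gamma> X (W 0) (A 0) (b 0) - y)"
    and radius_W: "8 / (1 - \<gamma>0) * (lam3 / C1) * norm X * r0 \<le> \<alpha>0^2"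
    and radius_A: "8 / (1 - \<gamma>0) * (\<gamma>0 * lam1 * lam3 / ((1 - \<gamma>0) * C2 * lam2)) * norm X * r0 \<le> \<alpha>0^2"
    and radius_b: "8 / (1 - \<gamma>0) * (lam1 / C3) * norm X * r0 \<le> \<alpha>0^2"
    and sigma_cond: "\<kappa> * (16 * lam3 / (1 - \<gamma>0)^2) * (norm X)^2 * r0 \<le> \<alpha>0^3"
    and contraction_cond: "\<kappa> * (16 * lam3^2 / (1 - \<gamma>0)^2) * (norm X)^2 \<le> \<alpha>0^2"
    and step_cond: "\<eta> * (lam1^2 * (norm X)^2) \<le> (1 - \<gamma>0)^2 / 2"
begin

abbreviation "Z k \<equiv> Zeq \<gamma> X (W k) (A k)"
abbreviation "res k \<equiv> yhat \<gamma> X (W k) (A k) (b k) - y"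
abbreviation "R k \<equiv> norm (res k)"
abbreviation "in_ball k \<equiv> specnorm (W k) \<le> lam1 \<and> specnorm (A k) \<le> lam2 \<and> norm (b k) \<le> lam3"

text \<open>Uniformly over the balls, Zmax bounds the equilibria, cW and cA bound the ratios of the
  W- and A-gradients to the residual, and LZ is a Lipschitz constant of the equilibrium.\<close>
abbreviation "Zmax \<equiv> norm X * lam1 / (1 - \<gamma>0)"
abbreviation "cW \<equiv> norm X * lam3 / (1 - \<gamma>0)"
abbreviation "cA \<equiv> \<gamma> * lam1 * norm X * lam3 / (1 - \<gamma>0)^2"
abbreviation "LZ \<equiv> \<kappa> * (norm X)^2 * lam3 / (1 - \<gamma>0)^2"

abbreviation "\<tau> \<equiv> \<eta> * \<alpha>0^2"
abbreviation "\<rho> \<equiv> sqrt (1 - \<tau> / 4)"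

lemma lam_pos: "0 < lam1" "0 < lam2" "0 < lam3"
  using C_pos specnorm_nonneg[of "W 0"] specnorm_nonneg[of "A 0"] norm_ge_zero[of "b 0"]
  unfolding lam1_def lam2_def lam3_def by linarith+

lemma one_minus_gamma0_pos: "0 < 1 - \<gamma>0"
  using gamma0_less_1 by simp

lemma alpha0_nonneg: "0 \<le> \<alpha>0"
  unfolding alpha0_def by (rule sigma_min_nonneg)

lemma gamma_eq: "\<gamma> = \<gamma>0 / lam2"
  using gamma0_def lam_pos by simp

lemma gradient_consts_nonneg: "0 \<le> Zmax" "0 \<le> \<gamma> * Zmax" "0 \<le> cW" "0 \<le> cA"
  using lam_pos one_minus_gamma0_pos gamma_pos by auto

lemma in_ball_0: "in_ball 0"
  using C_pos unfolding lam1_def lam2_def lam3_def by simp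

lemma contraction_le: "in_ball k \<Longrightarrow> \<gamma> * specnorm (A k) \<le> \<gamma>0"
  using gamma_pos unfolding gamma0_def by (simp add: mult_left_mono)

lemma contraction_less_1: "in_ball k \<Longrightarrow> \<gamma> * specnorm (A k) < 1"
  using contraction_le gamma0_less_1 by fastforce

lemma one_minus_gamma0_mult_le:
  assumes "in_ball k" "0 \<le> x" "(1 - \<gamma> * specnorm (A k)) * x \<le> B"
  shows "(1 - \<gamma>0) * x \<le> B"
  using contraction_le[OF assms(1)] assms(2,3) by (smt (verit) mult_right_mono)

lemma norm_Z_le: assumes "in_ball k" shows "norm (Z k) \<le> Zmax"
proof -
  have "(1 - \<gamma> * specnorm (A k)) * norm (Z k) \<le> norm X * specnorm (W k)"
    by (rule Zeq_norm_le) (use gamma_pos contraction_less_1[OF assms] in auto)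
  also have "\<dots> \<le> norm X * lam1" using assms by (simp add: mult_left_mono)
  finally have "(1 - \<gamma>0) * norm (Z k) \<le> norm X * lam1"
    by (rule one_minus_gamma0_mult_le[OF assms norm_ge_zero])
  thus ?thesis using one_minus_gamma0_pos by (simp add: pos_le_divide_eq mult.commute)
qed

lemma norm_backprop_le_residual:
  assumes "in_ball k"
  shows "norm (backprop \<gamma> X y (W k) (A k) (b k)) \<le> lam3 / (1 - \<gamma>0) * R k"
proof -
  have "(1 - \<gamma> * specnorm (A k)) * norm (backprop \<gamma> X y (W k) (A k) (b k)) \<le> norm (b k) * R k"
    by (rule norm_backprop_le) (use gamma_pos contraction_less_1[OF assms] in auto)
  also have "\<dots> \<le> lam3 * R k" using assms by (simp add: mult_right_mono)
  finally have "(1 - \<gamma>0) * norm (backprop \<gamma> X y (W k) (A k) (b k)) \<le> lam3 * R k"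
    by (rule one_minus_gamma0_mult_le[OF assms norm_ge_zero])
  thus ?thesis using one_minus_gamma0_pos by (simp add: pos_le_divide_eq mult.commute)
qed

lemma W_step_le:
  assumes "in_ball k"
  shows "norm (W (Suc k) - W k) \<le> cW * (\<eta> * R k)"
proof -
  have "norm (W (Suc k) - W k) = \<eta> * norm (gradW \<gamma> X y (W k) (A k) (b k))"
    using GD_W[of k] eta_pos by (simp add: norm_vecm[symmetric] vecm_diff)
  also have "\<dots> \<le> \<eta> * (norm X * (lam3 / (1 - \<gamma>0) * R k))"
    using eta_pos norm_backprop_le_residual[OF assms]
    by (intro mult_left_mono order_trans[OF norm_gradW_le]) auto
  also have "\<dots> = cW * (\<eta> * R k)" by simp
  finally show ?thesis .
qed

lemma A_step_le:
  assumes "in_ball k"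
  shows "norm (A (Suc k) - A k) \<le> cA * (\<eta> * R k)"
proof -
  have "norm (A (Suc k) - A k) = \<eta> * norm (gradA \<gamma> X y (W k) (A k) (b k))"
    using GD_A[of k] eta_pos by (simp add: norm_vecm[symmetric] vecm_diff)
  also have "\<dots> \<le> \<eta> * (\<gamma> * Zmax * (lam3 / (1 - \<gamma>0) * R k))"
  proof (intro mult_left_mono)
    have "norm (gradA \<gamma> X y (W k) (A k) (b k))
        \<le> \<gamma> * norm (Z k) * norm (backprop \<gamma> X y (W k) (A k) (b k))"
      by (rule norm_gradA_le) (use gamma_pos in simp)
    also have "\<dots> \<le> \<gamma> * Zmax * (lam3 / (1 - \<gamma>0) * R k)"
      using gamma_pos norm_Z_le[OF assms] norm_backprop_le_residual[OF assms] gradient_consts_nonneg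
      by (intro mult_mono mult_left_mono) auto
    finally show "norm (gradA \<gamma> X y (W k) (A k) (b k)) \<le> \<gamma> * Zmax * (lam3 / (1 - \<gamma>0) * R k)" .
  qed (use eta_pos in simp)
  also have "\<dots> = cA * (\<eta> * R k)" by (simp add: power2_eq_square)
  finally show ?thesis .
qed

lemma b_step_le:
  assumes "in_ball k"
  shows "norm (b (Suc k) - b k) \<le> Zmax * (\<eta> * R k)"
proof -
  have "norm (b (Suc k) - b k) = \<eta> * norm (gradb \<gamma> X y (W k) (A k) (b k))"
    using GD_b[of k] eta_pos by simp
  also have "\<dots> \<le> \<eta> * (Zmax * R k)"
    using eta_pos norm_Z_le[OF assms]
    by (intro mult_left_mono order_trans[OF norm_gradb_le] mult_right_mono) auto
  finally show ?thesis by (simp only: mult.left_commute)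
qed

lemma Lipschitz_const_eq: "\<gamma> * Zmax * (cA * s) + norm X * (cW * s) = (1 - \<gamma>0) * (LZ * s)"
proof -
  obtain u where u: "1 - \<gamma>0 = u" "u \<noteq> 0" using one_minus_gamma0_pos by auto
  show ?thesis unfolding kappa_def gamma_eq u(1) using u(2) lam_pos
    by (simp add: field_simps power2_eq_square)
qed

lemma Z_diff_le:
  assumes "in_ball i" "in_ball j" "norm (W i - W j) \<le> cW * s" "norm (A i - A j) \<le> cA * s"
  shows "norm (Z i - Z j) \<le> LZ * s"
proof -
  have "(1 - \<gamma> * specnorm (A j)) * norm (Z i - Z j)
      \<le> \<gamma> * norm (Z i) * specnorm (A i - A j) + norm X * specnorm (W i - W j)"
    using gamma_pos contraction_less_1[OF assms(1)] contraction_less_1[OF assms(2)]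
    by (intro Zeq_diff_le) auto
  also have "\<dots> \<le> \<gamma> * Zmax * (cA * s) + norm X * (cW * s)"
    using gamma_pos norm_Z_le[OF assms(1)] assms(3,4) gradient_consts_nonneg
      specnorm_le_norm[of "A i - A j"] specnorm_le_norm[of "W i - W j"] specnorm_nonneg[of "A i - A j"] specnorm_nonneg[of "W i - W j"]
    by (intro add_mono mult_mono mult_left_mono) auto
  also have "\<dots> = (1 - \<gamma>0) * (LZ * s)" by (rule Lipschitz_const_eq)
  finally have "(1 - \<gamma>0) * norm (Z i - Z j) \<le> (1 - \<gamma>0) * (LZ * s)"
    by (rule one_minus_gamma0_mult_le[OF assms(2) norm_ge_zero])
  thus ?thesis by (rule mult_left_le_imp_le[OF _ one_minus_gamma0_pos])
qed

lemma eta_norm_Z_sq_le: assumes "in_ball k" shows "\<eta> * (norm (Z k))^2 \<le> 1/2"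
proof -
  have "\<eta> * (norm (Z k))^2 \<le> \<eta> * Zmax^2"
    using norm_Z_le[OF assms] eta_pos by (intro mult_left_mono power_mono) auto
  also have "\<dots> = \<eta> * (lam1^2 * (norm X)^2) / (1 - \<gamma>0)^2"
    by (simp add: power_divide power_mult_distrib mult_ac)
  also have "\<dots> \<le> 1/2"
    using step_cond one_minus_gamma0_pos by (simp add: pos_divide_le_eq)
  finally show ?thesis .
qed

lemma tau_bounds: "0 \<le> \<tau>" "\<tau> \<le> 1/2"
proof -
  show "0 \<le> \<tau>" using eta_pos by simp
  have "\<alpha>0^2 \<le> (norm (Z 0))^2"
    unfolding alpha0_def by (intro power_mono sigma_min_le_norm sigma_min_nonneg)
  hence "\<tau> \<le> \<eta> * (norm (Z 0))^2" using eta_pos by (simp add: mult_left_mono)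
  thus "\<tau> \<le> 1/2" using eta_norm_Z_sq_le[OF in_ball_0] by linarith
qed

lemma rate_nonneg: "0 \<le> \<rho>"
  using tau_bounds by simp

lemma tau_le_rate: "\<tau> \<le> 8 * (1 - \<rho>)"
  using tau_bounds by (intro le_eight_one_minus_sqrt) auto

lemma step_budget: "\<eta> * (\<Sum>j<n. \<rho>^j) * \<alpha>0^2 \<le> 8"
proof -
  have "\<eta> * (\<Sum>j<n. \<rho>^j) * \<alpha>0^2 = \<tau> * (\<Sum>j<n. \<rho>^j)" by simp
  also have "\<dots> \<le> 8 * (1 - \<rho>) * (\<Sum>j<n. \<rho>^j)"
    using tau_le_rate rate_nonneg by (intro mult_right_mono sum_nonneg) auto
  also have "\<dots> = 8 * (1 - \<rho>^n)" by (simp add: one_diff_power_eq)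
  also have "\<dots> \<le> 8" using rate_nonneg by simp
  finally show ?thesis .
qed

lemma within_radius:
  assumes "8 * (c * r0) \<le> C * \<alpha>0^2" "0 \<le> C"
  shows "c * (\<eta> * r0 * (\<Sum>j<n. \<rho>^j)) \<le> C"
proof -
  have S: "0 \<le> \<eta> * (\<Sum>j<n. \<rho>^j)" using eta_pos rate_nonneg by (simp add: sum_nonneg)
  have "8 * (c * (\<eta> * r0 * (\<Sum>j<n. \<rho>^j))) = 8 * (c * r0) * (\<eta> * (\<Sum>j<n. \<rho>^j))" by simp
  also have "\<dots> \<le> C * \<alpha>0^2 * (\<eta> * (\<Sum>j<n. \<rho>^j))" using assms(1) S by (rule mult_right_mono)
  also have "\<dots> = C * (\<eta> * (\<Sum>j<n. \<rho>^j) * \<alpha>0^2)" by simp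
  also have "\<dots> \<le> C * 8" using step_budget assms(2) by (rule mult_left_mono)
  finally show ?thesis by simp
qed

lemma radius_consts:
  shows "8 * (cW * r0) \<le> C1 * \<alpha>0^2" and "8 * (cA * r0) \<le> C2 * \<alpha>0^2"
    and "8 * (Zmax * r0) \<le> C3 * \<alpha>0^2"
proof -
  have "8 * (cW * r0) = C1 * (8 / (1 - \<gamma>0) * (lam3 / C1) * norm X * r0)"
    using C_pos by simp
  also have "\<dots> \<le> C1 * \<alpha>0^2" by (rule mult_left_mono[OF radius_W]) (use C_pos in simp)
  finally show "8 * (cW * r0) \<le> C1 * \<alpha>0^2" .
  have "8 * (cA * r0)
      = C2 * (8 / (1 - \<gamma>0) * (\<gamma>0 * lam1 * lam3 / ((1 - \<gamma>0) * C2 * lam2)) * norm X * r0)"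
    unfolding gamma_eq using C_pos lam_pos by (simp add: power2_eq_square mult_ac)
  also have "\<dots> \<le> C2 * \<alpha>0^2" by (rule mult_left_mono[OF radius_A]) (use C_pos in simp)
  finally show "8 * (cA * r0) \<le> C2 * \<alpha>0^2" .
  have "8 * (Zmax * r0) = C3 * (8 / (1 - \<gamma>0) * (lam1 / C3) * norm X * r0)"
    using C_pos by simp
  also have "\<dots> \<le> C3 * \<alpha>0^2" by (rule mult_left_mono[OF radius_b]) (use C_pos in simp)
  finally show "8 * (Zmax * r0) \<le> C3 * \<alpha>0^2" .
qed

lemma geometric_displacement:
  fixes V :: "nat \<Rightarrow> 'a::real_normed_vector"
  assumes "\<forall>j<n. in_ball j \<and> R j \<le> \<rho>^j * r0"
    and "\<And>j. in_ball j \<Longrightarrow> norm (V (Suc j) - V j) \<le> c * (\<eta> * R j)" "0 \<le> c"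
  shows "norm (V n - V 0) \<le> c * (\<eta> * r0 * (\<Sum>j<n. \<rho>^j))"
proof -
  have "norm (V n - V 0) \<le> (c * \<eta> * r0) * (\<Sum>j<n. \<rho>^j)"
  proof (rule norm_diff_le_geometric_sum)
    fix j assume "j < n"
    hence "in_ball j" "R j \<le> \<rho>^j * r0" using assms(1) by auto
    hence "norm (V (Suc j) - V j) \<le> c * (\<eta> * (\<rho>^j * r0))"
      using assms(2,3) eta_pos by (meson order_trans mult_left_mono less_imp_le)
    thus "norm (V (Suc j) - V j) \<le> c * \<eta> * r0 * \<rho>^j" by (simp add: mult_ac)
  qed
  thus ?thesis by (simp add: mult_ac)
qed

lemma displacement_le:
  assumes "\<forall>j<n. in_ball j \<and> R j \<le> \<rho>^j * r0"
  shows "norm (W n - W 0) \<le> cW * (\<eta> * r0 * (\<Sum>j<n. \<rho>^j))"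
    and "norm (A n - A 0) \<le> cA * (\<eta> * r0 * (\<Sum>j<n. \<rho>^j))"
    and "norm (b n - b 0) \<le> Zmax * (\<eta> * r0 * (\<Sum>j<n. \<rho>^j))"
  using geometric_displacement[OF assms] W_step_le A_step_le b_step_le gradient_consts_nonneg
  by blast+


lemma in_ball_next:
  assumes "\<forall>j<n. in_ball j \<and> R j \<le> \<rho>^j * r0"
  shows "in_ball n"
proof -
  have "norm (W n - W 0) \<le> C1"
    using order_trans[OF displacement_le(1)[OF assms] within_radius[OF radius_consts(1)]] C_pos
    by simp
  hence "specnorm (W n) \<le> lam1"
    using specnorm_triangle[of "W 0" "W n - W 0"] specnorm_le_norm[of "W n - W 0"]
    unfolding lam1_def by simp
  moreover have "norm (A n - A 0) \<le> C2"
    using order_trans[OF displacement_le(2)[OF assms] within_radius[OF radius_consts(2)]] C_pos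
    by simp
  hence "specnorm (A n) \<le> lam2"
    using specnorm_triangle[of "A 0" "A n - A 0"] specnorm_le_norm[of "A n - A 0"]
    unfolding lam2_def by simp
  moreover have "norm (b n - b 0) \<le> C3"
    using order_trans[OF displacement_le(3)[OF assms] within_radius[OF radius_consts(3)]] C_pos
    by simp
  hence "norm (b n) \<le> lam3"
    using norm_triangle_ineq[of "b 0" "b n - b 0"] unfolding lam3_def by simp
  ultimately show ?thesis by blast
qed

lemma sigma_min_next:
  assumes "\<forall>j<n. in_ball j \<and> R j \<le> \<rho>^j * r0"
  shows "\<alpha>0 / 2 \<le> sigma_min (Z n)"
proof -
  let ?s = "\<eta> * r0 * (\<Sum>j<n. \<rho>^j)"
  have "norm (Z 0 - Z n) \<le> LZ * ?s"
    using in_ball_0 in_ball_next[OF assms] displacement_le[OF assms]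
    by (intro Z_diff_le) (simp_all add: norm_minus_commute)
  also have "\<dots> = \<kappa> * (16 * lam3 / (1 - \<gamma>0)^2) * (norm X)^2 * r0 / 16 * (\<eta> * (\<Sum>j<n. \<rho>^j))"
    by simp
  also have "\<dots> \<le> \<alpha>0^3 / 16 * (\<eta> * (\<Sum>j<n. \<rho>^j))"
    using sigma_cond eta_pos rate_nonneg
    by (intro mult_right_mono divide_right_mono mult_nonneg_nonneg sum_nonneg) auto
  also have "\<dots> = \<alpha>0 / 16 * (\<eta> * (\<Sum>j<n. \<rho>^j) * \<alpha>0^2)"
    by (simp add: power2_eq_square power3_eq_cube)
  also have "\<dots> \<le> \<alpha>0 / 16 * 8"
    using step_budget alpha0_nonneg by (intro mult_left_mono) auto
  finally have "norm (Z 0 - Z n) \<le> \<alpha>0 / 2" by simp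
  thus ?thesis using sigma_min_diff_le[of "Z 0" "Z n"] unfolding alpha0_def by simp
qed

lemma residual_next_eq:
  "res (Suc k) = (res k - \<eta> *\<^sub>R (Z k *v (transpose (Z k) *v res k)))
     + (Z (Suc k) - Z k) *v b (Suc k)"
proof -
  have b_next: "b (Suc k) = b k - \<eta> *\<^sub>R (transpose (Z k) *v res k)"
    using GD_b[of k] unfolding gradb_def .
  have "Z (Suc k) *v b (Suc k) = Z k *v b (Suc k) + (Z (Suc k) - Z k) *v b (Suc k)"
    by (simp add: matrix_vector_mult_diff_rdistrib)
  also have "Z k *v b (Suc k) = Z k *v b k - \<eta> *\<^sub>R (Z k *v (transpose (Z k) *v res k))"
    unfolding b_next by (simp add: matrix_vector_mult_diff_distrib matrix_vector_mult_scaleR)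
  finally show ?thesis unfolding yhat_def by (simp add: algebra_simps)
qed

lemma residual_contraction:
  assumes "in_ball k" "in_ball (Suc k)" "\<alpha>0 / 2 \<le> sigma_min (Z k)"
  shows "R (Suc k) \<le> \<rho> * R k"
proof -
  have "(\<alpha>0 / 2) * R k \<le> norm (transpose (Z k) *v res k)"
    using assms(3) sigma_min_mult_norm_le[of "Z k" "res k"] by (meson mult_right_mono norm_ge_zero order_trans)
  hence "norm (res k - \<eta> *\<^sub>R (Z k *v (transpose (Z k) *v res k)))
      \<le> sqrt (1 - 3/2 * \<eta> * (\<alpha>0 / 2)^2) * R k"
    using alpha0_nonneg eta_pos eta_norm_Z_sq_le[OF assms(1)]
    by (intro norm_least_squares_step_le) auto
  also have "3/2 * \<eta> * (\<alpha>0 / 2)^2 = 3 * \<tau> / 8" by (simp add: power2_eq_square)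
  finally have least_squares: "norm (res k - \<eta> *\<^sub>R (Z k *v (transpose (Z k) *v res k)))
      \<le> sqrt (1 - 3 * \<tau> / 8) * R k" .
  have "norm (Z (Suc k) - Z k) \<le> LZ * (\<eta> * R k)"
    using W_step_le[OF assms(1)] A_step_le[OF assms(1)]
    by (subst norm_minus_commute, intro Z_diff_le[OF assms(2,1)]) (simp_all add: norm_minus_commute)
  hence "norm ((Z (Suc k) - Z k) *v b (Suc k)) \<le> LZ * (\<eta> * R k) * lam3"
    using assms(2) norm_matrix_vector_le[of "Z (Suc k) - Z k" "b (Suc k)"]
    by (meson mult_mono norm_ge_zero order_trans)
  also have "\<dots> = \<kappa> * (16 * lam3^2 / (1 - \<gamma>0)^2) * (norm X)^2 / 16 * (\<eta> * R k)"
    by (simp add: power2_eq_square)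
  also have "\<dots> \<le> \<alpha>0^2 / 16 * (\<eta> * R k)"
    using contraction_cond eta_pos by (intro mult_right_mono divide_right_mono) auto
  finally have equilibrium_shift: "norm ((Z (Suc k) - Z k) *v b (Suc k)) \<le> \<tau> / 16 * R k"
    by (simp add: mult_ac)
  have "R (Suc k) \<le> (sqrt (1 - 3 * \<tau> / 8) + \<tau> / 16) * R k"
    using norm_triangle_le[OF add_mono[OF least_squares equilibrium_shift]]
    unfolding residual_next_eq[of k] by (simp add: algebra_simps)
  also have "\<dots> \<le> \<rho> * R k"
    using sqrt_contraction_le[of \<tau>] tau_bounds by (intro mult_right_mono) auto
  finally show ?thesis .
qed

lemma gd_invariant: "\<forall>j\<le>k. in_ball j \<and> \<alpha>0 / 2 \<le> sigma_min (Z j) \<and> R j \<le> \<rho>^j * r0"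
proof (induction k)
  case 0
  show ?case using in_ball_0 alpha0_def alpha0_nonneg r0_def by simp
next
  case (Suc k)
  hence before: "\<forall>j<Suc k. in_ball j \<and> R j \<le> \<rho>^j * r0" by (simp add: less_Suc_eq_le)
  have "R (Suc k) \<le> \<rho> * R k"
    using residual_contraction[of k] in_ball_next[OF before] Suc.IH by simp
  also have "\<dots> \<le> \<rho> * (\<rho>^k * r0)"
    using Suc.IH rate_nonneg by (intro mult_left_mono) auto
  also have "\<dots> = \<rho>^Suc k * r0" by simp
  finally show ?case
    using Suc.IH in_ball_next[OF before] sigma_min_next[OF before] by (auto simp: le_Suc_eq)
qed

theorem gd_convergence:
  "specnorm (W k) \<le> specnorm (W 0) + C1 \<and> specnorm (A k) \<le> specnorm (A 0) + C2
   \<and> norm (b k) \<le> norm (b 0) + C3 \<and> (\<exists>!Z. is_equil \<gamma> X (W k) (A k) Z)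
   \<and> \<alpha>0 / 2 \<le> sigma_min (Z k)
   \<and> loss \<gamma> X y (W k) (A k) (b k) \<le> (1 - \<eta> * \<alpha>0^2 / 4)^k * loss \<gamma> X y (W 0) (A 0) (b 0)"
proof -
  have k: "in_ball k" "\<alpha>0 / 2 \<le> sigma_min (Z k)" "R k \<le> \<rho>^k * r0"
    using gd_invariant[of k] by auto
  have "(R k)^2 \<le> (\<rho>^k * r0)^2" by (rule power_mono[OF k(3) norm_ge_zero])
  also have "\<dots> = (\<rho>^2)^k * r0^2"
    by (simp add: power_mult_distrib power_mult[symmetric] mult.commute)
  finally have "loss \<gamma> X y (W k) (A k) (b k) \<le> (1 - \<eta> * \<alpha>0^2 / 4)^k * loss \<gamma> X y (W 0) (A 0) (b 0)"
    using tau_bounds unfolding loss_def r0_def by simp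
  thus ?thesis using k lam1_def lam2_def lam3_def ex1_is_equil[OF _ contraction_less_1[OF k(1)]] gamma_pos
    by simp
qed

end

theorem theorem2:
  fixes X :: "real^'d^'N" and y :: "real^'N"
    and W :: "nat \<Rightarrow> real^'m^'d" and A :: "nat \<Rightarrow> real^'m^'m" and b :: "nat \<Rightarrow> real^'m"
    and \<gamma> \<eta> C1 C2 C3 :: real
  assumes C_pos: "C1 > 0" "C2 > 0" "C3 > 0"
    and GD: "\<And>k. vecm (W (Suc k)) = vecm (W k) - \<eta> *\<^sub>R gradW \<gamma> X y (W k) (A k) (b k)"
            "\<And>k. vecm (A (Suc k)) = vecm (A k) - \<eta> *\<^sub>R gradA \<gamma> X y (W k) (A k) (b k)"
            "\<And>k. b (Suc k) = b k - \<eta> *\<^sub>R gradb \<gamma> X y (W k) (A k) (b k)"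
    and gamma_pos: "\<gamma> > 0"
    and gamma0: "\<gamma> * (specnorm (A 0) + C2) < 1"
    and H1: "let \<alpha>0 = sigma_min (Zeq \<gamma> X (W 0) (A 0));
               lam1 = specnorm (W 0) + C1; lam2 = specnorm (A 0) + C2; lam3 = norm (b 0) + C3;
               \<gamma>0 = \<gamma> * lam2;
               lam0 = Max {lam1 / C3, \<gamma>0 * lam1 * lam3 / ((1 - \<gamma>0) * C2 * lam2), lam3 / C1};
               \<kappa> = 1 + \<gamma>0^2 / (1 - \<gamma>0)^2 * (lam1^2 / lam2^2);
               r0 = norm (yhat \<gamma> X (W 0) (A 0) (b 0) - y);
               lambar = \<kappa> * inverse ((\<kappa> * inverse (lam1^2) + inverse (lam3^2))^2)
             in \<alpha>0^2 \<ge> 8 / (1 - \<gamma>0) * lam0 * frob X * r0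
              \<and> \<alpha>0^3 \<ge> \<kappa> * (16 * lam3 / (1 - \<gamma>0)^2) * (frob X)^2 * r0
              \<and> \<alpha>0^2 \<ge> \<kappa> * (16 * lam3^2 / (1 - \<gamma>0)^2) * (frob X)^2
              \<and> 0 < \<eta>
              \<and> \<eta> * \<alpha>0^2 < 4
              \<and> \<eta> * (lam1^4 * lam3^2 * (frob X)^2) < 2 * (1 - \<gamma>0)^2 * lambar"
  shows "\<forall>k. let \<alpha>0 = sigma_min (Zeq \<gamma> X (W 0) (A 0))
             in specnorm (W k) \<le> specnorm (W 0) + C1
              \<and> specnorm (A k) \<le> specnorm (A 0) + C2
              \<and> norm (b k) \<le> norm (b 0) + C3
              \<and> (\<exists>!Z. is_equil \<gamma> X (W k) (A k) Z)
              \<and> sigma_min (Zeq \<gamma> X (W k) (A k)) \<ge> \<alpha>0 / 2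
              \<and> loss \<gamma> X y (W k) (A k) (b k)
                  \<le> (1 - \<eta> * \<alpha>0^2 / 4)^k * loss \<gamma> X y (W 0) (A 0) (b 0)"
proof -
  define \<alpha>0 where "\<alpha>0 = sigma_min (Zeq \<gamma> X (W 0) (A 0))"
  define lam1 where "lam1 = specnorm (W 0) + C1"
  define lam2 where "lam2 = specnorm (A 0) + C2"
  define lam3 where "lam3 = norm (b 0) + C3"
  define \<gamma>0 where "\<gamma>0 = \<gamma> * lam2"
  define lam0 where "lam0 = Max {lam1 / C3, \<gamma>0 * lam1 * lam3 / ((1 - \<gamma>0) * C2 * lam2), lam3 / C1}"
  define \<kappa> where "\<kappa> = 1 + \<gamma>0^2 / (1 - \<gamma>0)^2 * (lam1^2 / lam2^2)"
  define r0 where "r0 = norm (yhat \<gamma> X (W 0) (A 0) (b 0) - y)"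
  have H: "8 / (1 - \<gamma>0) * lam0 * norm X * r0 \<le> \<alpha>0^2"
    "\<kappa> * (16 * lam3 / (1 - \<gamma>0)^2) * (norm X)^2 * r0 \<le> \<alpha>0^3"
    "\<kappa> * (16 * lam3^2 / (1 - \<gamma>0)^2) * (norm X)^2 \<le> \<alpha>0^2" "0 < \<eta>"
    "\<eta> * (lam1^4 * lam3^2 * (norm X)^2)
       < 2 * (1 - \<gamma>0)^2 * (\<kappa> * inverse ((\<kappa> * inverse (lam1^2) + inverse (lam3^2))^2))"
    using H1 unfolding Let_def frob_eq_norm \<alpha>0_def lam1_def lam2_def lam3_def \<gamma>0_def lam0_def \<kappa>_def r0_def
    by auto
  have pos: "0 < lam1" "0 < lam3" "\<gamma>0 < 1" "0 < \<kappa>"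
    using C_pos specnorm_nonneg[of "W 0"] norm_ge_zero[of "b 0"] gamma0
    unfolding lam1_def lam3_def \<gamma>0_def lam2_def \<kappa>_def by (auto intro: add_pos_nonneg add_nonneg_pos)
  have radius: "8 / (1 - \<gamma>0) * q * norm X * r0 \<le> \<alpha>0^2" if "q \<le> lam0" for q
    using that pos(3) norm_ge_zero[of "yhat \<gamma> X (W 0) (A 0) (b 0) - y"] unfolding r0_def[symmetric]
    by (intro order_trans[OF _ H(1)] mult_right_mono mult_left_mono) auto
  interpret implicit_gd X y W A b \<gamma> \<eta> C1 C2 C3 \<alpha>0 lam1 lam2 lam3 \<gamma>0 \<kappa> r0
    using C_pos GD gamma_pos H(2-4) pos(3) radius[of "lam3 / C1"] radius[of "lam1 / C3"]
      radius[of "\<gamma>0 * lam1 * lam3 / ((1 - \<gamma>0) * C2 * lam2)"]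
      step_size_bound[OF pos(4,1,2) _ H(5)]
    by unfold_locales (auto simp: \<alpha>0_def lam1_def lam2_def lam3_def \<gamma>0_def \<kappa>_def r0_def lam0_def)
  show ?thesis using gd_convergence unfolding Let_def \<alpha>0_def by blast
qed

end
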